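(* Let $M, N \in \mathbb{N}$, let $y_1,\dots,y_N \in \mathbb{R}^2$ be sample points, and let $x_0, x_1, \dots, x_M \in \mathbb{R}^2$ be the successive robot positions produced by the single-agent exploration algorithm described in the context. Define weights recursively by $n_0(y_j) = \frac{1}{N}$ for all $j$. For $i = 1,\dots,M$, let $(\pi^\star_{ij})_{j=1}^N$ be an optimal solution, and $\tilde W(i)$ the optimal value, of $$\min_{\pi_{i1},\dots,\pi_{iN}} \sum_{j=1}^N \pi_{ij}\|x_i - y_j\| \quad\text{s.t.}\quad \pi_{ij} \ge 0,\ \sum_{j=1}^N \pi_{ij} = \frac{1}{M},\ \pi_{ij} \le \min\!\left(n_{i-1}(y_j), \tfrac{1}{M}\right)\ \forall j,$$ and set $n_i(y_j) = n_{i-1}(y_j) - \pi^\star_{ij}$. For $0 \le t \le M$, let $\mu_t$ be the discrete measure that assigns mass $\frac{1}{M}$ to each of $x_1,\dots,x_t$ and an additional mass $\frac{M-t}{M}$ to $x_t$ (for $t=0$, $\mu_0$ is the unit mass at $x_0$). Let $\nu$ assign mass $\frac{1}{N}$ to each $y_j$. Let $W(t)$ be the optimal value of the transportation linear program $$\min_{\gamma \ge 0} \sum_{a,j} \gamma_{aj}\|p_a - y_j\| \quad \text{s.t.}\quad \sum_j \gamma_{aj} = \mu_t(p_a)\ \forall a,\quad \sum_a \gamma_{aj} = \frac{1}{N}\ \forall j,$$ where $p_a$ ranges over the atoms of $\mu_t$ and $\mu_t(p_a)$ is the mass of $\mu_t$ at $p_a$ (i.e. the Wasserstein-1 distance between $\mu_t$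 and $\nu$). Then for every $0 \le t \le M$, $$W(t) \le \sum_{i=1}^{t} \tilde W(i) + \sum_{j=1}^N n_t(y_j)\,\|x_t - y_j\|.$$
   Context: $\|\cdot\|$ is the Euclidean norm. Single-agent exploration algorithm: a robot starts at $x_0$ and has an energy budget of $M$ discrete time steps. At each step $t$, it picks a goal point among sample points with positive weight $n_t(y_j)$, using a receding-horizon cost. The next position $x_{t+1}$ is then whatever point an arbitrary given motion controller reaches when steering toward that goal, so $x_{t+1}$ may differ from the goal. After moving, the weights are updated by $n_{t+1}(y_j) = n_t(y_j) - \pi^\star_{(t+1)j}$, where $\pi^\star_{(t+1)j}$ solves the linear program stated in the claim. Standing assumption (Assumption 1 of the paper): at time $t$, each past robot point $x_1,\dots,x_t$ carries mass $\frac{1}{M}$. The not-yet-determined future robot points $x_{t+1},\dots,x_M$ are all regarded as located at the current position $x_t$, carrying total mass $\frac{M-t}{M}$. This is what the measure $\mu_t$ encodes. *)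

theory Defs
  imports "HOL-Analysis.Analysis"
begin

definition step_feasible ::
  "nat \<Rightarrow> nat \<Rightarrow> (nat \<Rightarrow> real) \<Rightarrow> (nat \<Rightarrow> real) \<Rightarrow> bool" where
  "step_feasible M N nprev p \<longleftrightarrow>
     (\<forall>j\<in>{1..N}. 0 \<le> p j \<and> p j \<le> min (nprev j) (1 / real M)) \<and>
     (\<Sum>j=1..N. p j) = 1 / real M"

definition step_cost ::
  "nat \<Rightarrow> real^2 \<Rightarrow> (nat \<Rightarrow> real^2) \<Rightarrow> (nat \<Rightarrow> real) \<Rightarrow> real" where
  "step_cost N xi y p = (\<Sum>j=1..N. p j * norm (xi - y j))"

definition step_optimal ::
  "nat \<Rightarrow> nat \<Rightarrow> real^2 \<Rightarrow> (nat \<Rightarrow> real^2) \<Rightarrow> (nat \<Rightarrow> real) \<Rightarrow> (nat \<Rightarrow> real) \<Rightarrow> bool" where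
  "step_optimal M N xi y nprev p \<longleftrightarrow>
     step_feasible M N nprev p \<and>
     (\<forall>q. step_feasible M N nprev q \<longrightarrow> step_cost N xi y p \<le> step_cost N xi y q)"

definition mu_t :: "nat \<Rightarrow> (nat \<Rightarrow> real^2) \<Rightarrow> nat \<Rightarrow> real^2 \<Rightarrow> real" where
  "mu_t M x t p = (\<Sum>i\<in>{1..t}. if x i = p then 1 / real M else 0)
                  + (if x t = p then (real M - real t) / real M else 0)"

definition atoms_mu :: "(nat \<Rightarrow> real^2) \<Rightarrow> nat \<Rightarrow> (real^2) set" where
  "atoms_mu x t = x ` insert t {1..t}"

definition transport_feasible ::
  "nat \<Rightarrow> nat \<Rightarrow> (nat \<Rightarrow> real^2) \<Rightarrow> nat \<Rightarrow> (real^2 \<Rightarrow> nat \<Rightarrow> real) \<Rightarrow> bool" where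
  "transport_feasible M N x t g \<longleftrightarrow>
     (\<forall>a\<in>atoms_mu x t. \<forall>j\<in>{1..N}. 0 \<le> g a j) \<and>
     (\<forall>a\<in>atoms_mu x t. (\<Sum>j=1..N. g a j) = mu_t M x t a) \<and>
     (\<forall>j\<in>{1..N}. (\<Sum>a\<in>atoms_mu x t. g a j) = 1 / real N)"

definition transport_cost ::
  "nat \<Rightarrow> (nat \<Rightarrow> real^2) \<Rightarrow> (nat \<Rightarrow> real^2) \<Rightarrow> nat \<Rightarrow> (real^2 \<Rightarrow> nat \<Rightarrow> real) \<Rightarrow> real" where
  "transport_cost N x y t g = (\<Sum>a\<in>atoms_mu x t. \<Sum>j=1..N. g a j * norm (a - y j))"

definition W_t :: "nat \<Rightarrow> nat \<Rightarrow> (nat \<Rightarrow> real^2) \<Rightarrow> (nat \<Rightarrow> real^2) \<Rightarrow> nat \<Rightarrow> real" where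
  "W_t M N x y t = Inf (transport_cost N x y t ` {g. transport_feasible M N x t g})"

end

theory Submission
  imports Defs
begin

text \<open>The step programs, read as shipments from x i to the samples, transport mass 1/M out of
  each visited position x i, i \<le> t; what has not been shipped, the residual weights n t, is
  exactly the mass (M - t)/M that mu t parks at the current position x t. Together they form a
  feasible plan between mu t and nu whose cost is the right-hand side, and W t is at most the cost
  of any feasible plan.\<close>

lemma sum_regroup_by_image:
  fixes h :: "'i \<Rightarrow> 'a \<Rightarrow> 'b::comm_monoid_add"
  assumes "finite A" "finite S" "x ` S \<subseteq> A"
  shows "(\<Sum>a\<in>A. \<Sum>i\<in>S. if x i = a then h i a else 0) = (\<Sum>i\<in>S. h i (x i))"
proof -
  have "(\<Sum>a\<in>A. \<Sum>i\<in>S. if x i = a then h i a else 0)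
      = (\<Sum>i\<in>S. \<Sum>a\<in>A. if x i = a then h i a else 0)"
    by (rule sum.swap)
  also have "\<dots> = (\<Sum>i\<in>S. h i (x i))"
    using assms by (intro sum.cong) (auto simp: sum.delta)
  finally show ?thesis .
qed

lemma weights_eq_initial_minus_shipped:
  fixes M N :: nat and n p :: "nat \<Rightarrow> nat \<Rightarrow> real"
  assumes upd: "\<forall>i\<in>{1..M}. \<forall>j\<in>{1..N}. n i j = n (i - 1) j - p i j"
    and "j \<in> {1..N}"
  shows "i \<le> M \<Longrightarrow> n i j = n 0 j - (\<Sum>k=1..i. p k j)"
proof (induction i)
  case (Suc i)
  then show ?case using upd \<open>j \<in> {1..N}\<close> by simp
qed simp

lemma weights_total:
  fixes M N :: nat and n p :: "nat \<Rightarrow> nat \<Rightarrow> real"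
  assumes feas: "\<forall>i\<in>{1..M}. step_feasible M N (n (i - 1)) (p i)"
    and upd: "\<forall>i\<in>{1..M}. \<forall>j\<in>{1..N}. n i j = n (i - 1) j - p i j"
    and "i \<le> M"
  shows "(\<Sum>j=1..N. n i j) = (\<Sum>j=1..N. n 0 j) - real i / real M"
  using \<open>i \<le> M\<close>
proof (induction i)
  case (Suc i)
  then have i: "Suc i \<in> {1..M}" by simp
  have "(\<Sum>j=1..N. n (Suc i) j) = (\<Sum>j=1..N. n i j) - (\<Sum>j=1..N. p (Suc i) j)"
    using upd i by (simp add: sum_subtractf)
  also have "\<dots> = (\<Sum>j=1..N. n 0 j) - real i / real M - 1 / real M"
    using Suc feas i by (simp add: step_feasible_def)
  finally show ?case by (simp add: add_divide_distrib)
qed simp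

lemma weights_nonneg:
  fixes M N :: nat and n p :: "nat \<Rightarrow> nat \<Rightarrow> real"
  assumes "\<forall>i\<in>{1..M}. step_feasible M N (n (i - 1)) (p i)"
    and "\<forall>i\<in>{1..M}. \<forall>j\<in>{1..N}. n i j = n (i - 1) j - p i j"
    and "i \<in> {1..M}" "j \<in> {1..N}"
  shows "0 \<le> n i j"
  using assms by (simp add: step_feasible_def)

definition exploration_plan ::
  "(nat \<Rightarrow> real^2) \<Rightarrow> (nat \<Rightarrow> nat \<Rightarrow> real) \<Rightarrow> (nat \<Rightarrow> real) \<Rightarrow> nat \<Rightarrow> real^2 \<Rightarrow> nat \<Rightarrow> real"
  where "exploration_plan x p r t a j =
    (\<Sum>i\<in>{1..t}. if x i = a then p i j else 0) + (if x t = a then r j else 0)"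

lemma sum_atoms_mu_regroup:
  "(\<Sum>a\<in>atoms_mu x t. (\<Sum>i\<in>{1..t}. if x i = a then h i a else 0) + (if x t = a then g a else 0))
    = (\<Sum>i=1..t. h i (x i)) + g (x t)"
proof -
  have "finite (atoms_mu x t)" "x ` {1..t} \<subseteq> atoms_mu x t" "x t \<in> atoms_mu x t"
    by (auto simp: atoms_mu_def)
  then show ?thesis
    by (simp add: sum.distrib sum_regroup_by_image sum.delta)
qed

lemma exploration_plan_feasible:
  fixes M N t :: nat and p :: "nat \<Rightarrow> nat \<Rightarrow> real"
  assumes "M \<ge> 1"
    and p_nonneg: "\<forall>i\<in>{1..t}. \<forall>j\<in>{1..N}. 0 \<le> p i j"
    and p_sum: "\<forall>i\<in>{1..t}. (\<Sum>j=1..N. p i j) = 1 / real M"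
    and r_nonneg: "\<forall>j\<in>{1..N}. 0 \<le> r j"
    and r_sum: "(\<Sum>j=1..N. r j) = 1 - real t / real M"
    and marginal: "\<forall>j\<in>{1..N}. (\<Sum>i=1..t. p i j) + r j = 1 / real N"
  shows "transport_feasible M N x t (exploration_plan x p r t)"
  unfolding transport_feasible_def
proof (intro conjI ballI)
  fix a j assume "j \<in> {1..N}"
  then show "0 \<le> exploration_plan x p r t a j"
    using p_nonneg r_nonneg unfolding exploration_plan_def
    by (intro add_nonneg_nonneg sum_nonneg) auto
next
  fix a
  have "(\<Sum>j=1..N. exploration_plan x p r t a j)
      = (\<Sum>i\<in>{1..t}. if x i = a then (\<Sum>j=1..N. p i j) else 0)
        + (if x t = a then (\<Sum>j=1..N. r j) else 0)"
    unfolding exploration_plan_def sum.distrib by (subst sum.swap) (auto intro!: sum.cong)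
  also have "\<dots> = mu_t M x t a"
  proof -
    have "(\<Sum>i\<in>{1..t}. if x i = a then (\<Sum>j=1..N. p i j) else 0)
        = (\<Sum>i\<in>{1..t}. if x i = a then 1 / real M else 0)"
      using p_sum by (intro sum.cong) auto
    then show ?thesis
      using r_sum \<open>M \<ge> 1\<close> unfolding mu_t_def by (simp add: diff_divide_distrib)
  qed
  finally show "(\<Sum>j=1..N. exploration_plan x p r t a j) = mu_t M x t a" .
next
  fix j assume "j \<in> {1..N}"
  have "(\<Sum>a\<in>atoms_mu x t. exploration_plan x p r t a j) = (\<Sum>i=1..t. p i j) + r j"
    unfolding exploration_plan_def by (rule sum_atoms_mu_regroup)
  then show "(\<Sum>a\<in>atoms_mu x t. exploration_plan x p r t a j) = 1 / real N"
    using marginal \<open>j \<in> {1..N}\<close> by simp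
qed

lemma exploration_plan_cost:
  fixes p :: "nat \<Rightarrow> nat \<Rightarrow> real"
  shows "transport_cost N x y t (exploration_plan x p r t)
    = (\<Sum>i=1..t. step_cost N (x i) y (p i)) + step_cost N (x t) y r"
proof -
  have "exploration_plan x p r t a j * norm (a - y j)
      = (\<Sum>i\<in>{1..t}. if x i = a then p i j * norm (a - y j) else 0)
        + (if x t = a then r j * norm (a - y j) else 0)" for a j
    by (auto simp: exploration_plan_def distrib_right sum_distrib_right intro!: sum.cong)
  then have "transport_cost N x y t (exploration_plan x p r t)
      = (\<Sum>j=1..N. \<Sum>a\<in>atoms_mu x t.
          (\<Sum>i\<in>{1..t}. if x i = a then p i j * norm (a - y j) else 0)
          + (if x t = a then r j * norm (a - y j) else 0))"
    unfolding transport_cost_def by (subst sum.swap) simp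
  also have "\<dots> = (\<Sum>j=1..N. (\<Sum>i=1..t. p i j * norm (x i - y j)) + r j * norm (x t - y j))"
    by (intro sum.cong refl sum_atoms_mu_regroup)
  also have "\<dots> = (\<Sum>i=1..t. step_cost N (x i) y (p i)) + step_cost N (x t) y r"
    unfolding step_cost_def sum.distrib by (subst sum.swap) (rule refl)
  finally show ?thesis .
qed

lemma W_t_le_transport_cost:
  assumes "transport_feasible M N x t g"
  shows "W_t M N x y t \<le> transport_cost N x y t g"
proof -
  have "bdd_below (transport_cost N x y t ` {g. transport_feasible M N x t g})"
    by (rule bdd_belowI[of _ 0])
      (auto simp: transport_cost_def transport_feasible_def intro!: sum_nonneg)
  then show ?thesis
    unfolding W_t_def using assms by (intro cInf_lower) auto
qed

theorem theorem1:
  fixes M N :: nat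
    and x y :: "nat \<Rightarrow> real^2"
    and n pi :: "nat \<Rightarrow> nat \<Rightarrow> real"
    and Wtil :: "nat \<Rightarrow> real"
    and t :: nat
  assumes "M \<ge> 1" and "N \<ge> 1"
    and n0: "\<forall>j\<in>{1..N}. n 0 j = 1 / real N"
    and opt: "\<forall>i\<in>{1..M}. step_optimal M N (x i) y (n (i - 1)) (pi i)"
    and val: "\<forall>i\<in>{1..M}. Wtil i = step_cost N (x i) y (pi i)"
    and upd: "\<forall>i\<in>{1..M}. \<forall>j\<in>{1..N}. n i j = n (i - 1) j - pi i j"
    and "t \<le> M"
  shows "W_t M N x y t \<le> (\<Sum>i=1..t. Wtil i) + (\<Sum>j=1..N. n t j * norm (x t - y j))"
proof -
  have feas: "\<forall>i\<in>{1..M}. step_feasible M N (n (i - 1)) (pi i)"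
    using opt by (simp add: step_optimal_def)
  have "transport_feasible M N x t (exploration_plan x pi (n t) t)"
  proof (rule exploration_plan_feasible)
    show "\<forall>j\<in>{1..N}. 0 \<le> n t j"
      using weights_nonneg[OF feas upd] n0 \<open>t \<le> M\<close> by (cases "t = 0") auto
    show "(\<Sum>j=1..N. n t j) = 1 - real t / real M"
      using weights_total[OF feas upd \<open>t \<le> M\<close>] n0 \<open>N \<ge> 1\<close> by simp
    show "\<forall>j\<in>{1..N}. (\<Sum>i=1..t. pi i j) + n t j = 1 / real N"
      using weights_eq_initial_minus_shipped[OF upd _ \<open>t \<le> M\<close>] n0 by simp
  qed (use feas \<open>M \<ge> 1\<close> \<open>t \<le> M\<close> in \<open>auto simp: step_feasible_def\<close>)
  then have "W_t M N x y t \<le> (\<Sum>i=1..t. step_cost N (x i) y (pi i)) + step_cost N (x t) y (n t)"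
    using W_t_le_transport_cost exploration_plan_cost by metis
  also have "\<dots> = (\<Sum>i=1..t. Wtil i) + (\<Sum>j=1..N. n t j * norm (x t - y j))"
    using val \<open>t \<le> M\<close> by (simp add: step_cost_def)
  finally show ?thesis .
qed

end
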